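(* Let $S\subseteq\mathbb{R}^n$ be a closed set, $\bar x\in S$ and $d\in T_S(\bar x)$. Then $$T_S^2(\bar x;d)+\hat T_S(\bar x;d)=T_S^2(\bar x;d)\quad\text{and}\quad T_S^{''}(\bar x;d)+\hat T_S(\bar x;d)=T_S^{''}(\bar x;d).$$
   Context: $T_S(\bar x)=\{d\mid \exists t_k\downarrow 0,\ d_k\to d,\ \bar x+t_kd_k\in S\}$ is the tangent cone. $T_S^2(\bar x;d):=\{w\mid \exists t_k\downarrow 0,\ w_k\to w,\ \bar x+t_kd+\tfrac12 t_k^2w_k\in S\}$ (outer second-order tangent set); $T_S^{''}(\bar x;d):=\{w\mid \exists (t_k,r_k)\downarrow(0,0),\ w_k\to w,\ t_k/r_k\to0,\ \bar x+t_kd+\tfrac12 t_kr_kw_k\in S\}$ (asymptotic second-order tangent cone). The directional regular (Clarke) tangent cone is the Painlevé–Kuratowski lower limit $\hat T_S(\bar x;d):=\liminf_{t\downarrow 0,\,d'\to d,\,\bar x+td'\in S}T_S(\bar x+td')$, i.e. the set of $v$ such that for every sequence $t_k\downarrow0$, $d'_k\to d$ with $\bar x+t_kd'_k\in S$ there exist $v_k\to v$ with $v_k\in T_S(\bar x+t_kd'_k)$ for all large $k$. *)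

theory Defs
  imports "HOL-Analysis.Analysis"
begin

definition tangent_cone :: "('a::real_normed_vector) set \<Rightarrow> 'a \<Rightarrow> 'a set" where
  "tangent_cone S x = {d. \<exists>(t::nat \<Rightarrow> real) dk. (\<forall>k. t k > 0) \<and> t \<longlonglongrightarrow> 0 \<and>
      dk \<longlonglongrightarrow> d \<and> (\<forall>k. x + t k *\<^sub>R dk k \<in> S)}"

definition second_order_tangent_set :: "('a::real_normed_vector) set \<Rightarrow> 'a \<Rightarrow> 'a \<Rightarrow> 'a set" where
  "second_order_tangent_set S x d = {w. \<exists>(t::nat \<Rightarrow> real) wk. (\<forall>k. t k > 0) \<and> t \<longlonglongrightarrow> 0 \<and>
      wk \<longlonglongrightarrow> w \<and> (\<forall>k. x + t k *\<^sub>R d + ((1/2) * (t k)\<^sup>2) *\<^sub>R wk k \<in> S)}"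

definition asymptotic_second_order_tangent_cone :: "('a::real_normed_vector) set \<Rightarrow> 'a \<Rightarrow> 'a \<Rightarrow> 'a set" where
  "asymptotic_second_order_tangent_cone S x d = {w. \<exists>(t::nat \<Rightarrow> real) (r::nat \<Rightarrow> real) wk.
      (\<forall>k. t k > 0) \<and> (\<forall>k. r k > 0) \<and> t \<longlonglongrightarrow> 0 \<and> r \<longlonglongrightarrow> 0 \<and>
      (\<lambda>k. t k / r k) \<longlonglongrightarrow> 0 \<and> wk \<longlonglongrightarrow> w \<and>
      (\<forall>k. x + t k *\<^sub>R d + ((1/2) * t k * r k) *\<^sub>R wk k \<in> S)}"

definition directional_regular_tangent_cone :: "('a::real_normed_vector) set \<Rightarrow> 'a \<Rightarrow> 'a \<Rightarrow> 'a set" where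
  "directional_regular_tangent_cone S x d = {v. \<forall>(t::nat \<Rightarrow> real) dk.
      (\<forall>k. t k > 0) \<and> t \<longlonglongrightarrow> 0 \<and> dk \<longlonglongrightarrow> d \<and> (\<forall>k. x + t k *\<^sub>R dk k \<in> S) \<longrightarrow>
      (\<exists>vk. vk \<longlonglongrightarrow> v \<and> (\<forall>\<^sub>F k in sequentially. vk k \<in> tangent_cone S (x + t k *\<^sub>R dk k)))}"

end

theory Submission
  imports Defs
begin

text \<open>
  A vector \<open>v\<close> of the directional regular tangent cone is approximated within any \<open>\<epsilon>\<close> by tangent
  vectors of \<open>S\<close> at all points \<open>x + t e \<in> S\<close> with \<open>t\<close> small and \<open>e\<close> close to \<open>d\<close>. A
  viability argument along a segment \<open>y + s v\<close> starting in \<open>S\<close> then shows that its distance to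
  \<open>S\<close> grows at most like \<open>\<epsilon> s\<close>, as long as its nearest points stay in that region. Applied to
  \<open>y = x + t\<^sub>k d + h\<^sub>k w\<^sub>k \<in> S\<close> with \<open>h\<^sub>k = o(t\<^sub>k)\<close>, this yields points of \<open>S\<close> at distance
  \<open>o(h\<^sub>k)\<close> from \<open>x + t\<^sub>k d + h\<^sub>k (w\<^sub>k + v)\<close>, so \<open>w + v\<close> is again a second-order tangent; both
  second-order sets are of this form, with \<open>h\<^sub>k = t\<^sub>k\<^sup>2/2\<close> and \<open>h\<^sub>k = t\<^sub>k r\<^sub>k/2\<close>.
\<close>

lemma zero_mem_tangent_cone:
  assumes "y \<in> S"
  shows "0 \<in> tangent_cone S y"
  unfolding tangent_cone_def
  using assms LIMSEQ_inverse_real_of_nat[unfolded inverse_eq_divide]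
  by (intro CollectI exI[of _ "\<lambda>k. 1 / real (Suc k)"] exI[of _ "\<lambda>_. 0"]) simp

lemma zero_mem_directional_regular_tangent_cone: "0 \<in> directional_regular_tangent_cone S x d"
  unfolding directional_regular_tangent_cone_def
proof (intro CollectI allI impI)
  fix t :: "nat \<Rightarrow> real" and dk
  assume "(\<forall>k. t k > 0) \<and> t \<longlonglongrightarrow> 0 \<and> dk \<longlonglongrightarrow> d \<and> (\<forall>k. x + t k *\<^sub>R dk k \<in> S)"
  then have "\<forall>k. 0 \<in> tangent_cone S (x + t k *\<^sub>R dk k)"
    using zero_mem_tangent_cone by blast
  then show "\<exists>vk. vk \<longlonglongrightarrow> 0 \<and> (\<forall>\<^sub>F k in sequentially. vk k \<in> tangent_cone S (x + t k *\<^sub>R dk k))"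
    by (intro exI[of _ "\<lambda>_. 0"]) (simp add: always_eventually)
qed

lemma infdist_step_along_tangent:
  fixes S :: "'a::real_normed_vector set"
  assumes p: "p \<in> S" and u: "u \<in> tangent_cone S p" "norm (u - v) < \<epsilon>" and \<tau>: "\<tau> > 0"
  obtains t where "0 < t" "t < \<tau>" "infdist (z + t *\<^sub>R v) S \<le> dist z p + t * \<epsilon>"
proof -
  obtain t uk where t: "\<forall>k. t k > 0" "t \<longlonglongrightarrow> 0" and uk: "uk \<longlonglongrightarrow> u"
    and uS: "\<forall>k. p + t k *\<^sub>R uk k \<in> S"
    using u(1) unfolding tangent_cone_def by blast
  have "(\<lambda>k. norm (uk k - v)) \<longlonglongrightarrow> norm (u - v)"
    by (intro tendsto_intros uk)
  then have "\<forall>\<^sub>F k in sequentially. norm (uk k - v) < \<epsilon>"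
    using u(2) order_tendstoD(2) by blast
  moreover have "\<forall>\<^sub>F k in sequentially. t k < \<tau>"
    using t(2) \<tau> order_tendstoD(2) by blast
  ultimately have "\<forall>\<^sub>F k in sequentially. norm (uk k - v) < \<epsilon> \<and> t k < \<tau>"
    by eventually_elim blast
  then obtain k where k: "norm (uk k - v) < \<epsilon>" "t k < \<tau>"
    using eventually_happens'[OF sequentially_bot] by blast
  have tk: "t k > 0"
    using t(1) by simp
  have "infdist (z + t k *\<^sub>R v) S \<le> dist (z + t k *\<^sub>R v) (p + t k *\<^sub>R uk k)"
    using uS by (intro infdist_le) auto
  also have "\<dots> = norm ((z - p) + t k *\<^sub>R (v - uk k))"
    by (simp add: dist_norm algebra_simps)
  also have "\<dots> \<le> norm (z - p) + norm (t k *\<^sub>R (v - uk k))"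
    by (rule norm_triangle_ineq)
  also have "\<dots> = dist z p + t k * norm (uk k - v)"
    using tk by (simp add: dist_norm norm_minus_commute)
  also have "\<dots> \<le> dist z p + t k * \<epsilon>"
    using k tk by simp
  finally show ?thesis
    using that tk k(2) by blast
qed

lemma infdist_along_ray_le:
  fixes S :: "'a::{real_normed_vector, heine_borel} set"
  assumes S: "closed S" and y: "y \<in> S" and h: "h \<ge> 0"
    and tangent: "\<And>s p. s \<in> {0..h} \<Longrightarrow> p \<in> S \<Longrightarrow> dist (y + s *\<^sub>R v) p = infdist (y + s *\<^sub>R v) S
                    \<Longrightarrow> \<exists>u\<in>tangent_cone S p. norm (u - v) < \<epsilon>"
  shows "infdist (y + h *\<^sub>R v) S \<le> \<epsilon> * h"
proof (rule ccontr)
  assume far: "\<not> ?thesis"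
  define g where "g s = infdist (y + s *\<^sub>R v) S - \<epsilon> * s" for s
  define K where "K = {0..h} \<inter> g -` {..0}"
  have "continuous_on {0..h} g"
    unfolding g_def by (intro continuous_intros)
  then have "closed K"
    unfolding K_def by (intro continuous_closed_preimage) auto
  moreover have "bounded K"
    unfolding K_def by (simp add: bounded_Int)
  moreover have "0 \<in> K"
    using y h by (simp add: K_def g_def)
  ultimately obtain s0 where s0: "s0 \<in> K" and s0_max: "\<And>s. s \<in> K \<Longrightarrow> s \<le> s0"
    using compact_attains_sup[of K] compact_eq_bounded_closed by blast
  have "h \<notin> K"
    using far by (simp add: K_def g_def)
  with s0 have s0_range: "0 \<le> s0" "s0 < h" and g_s0: "g s0 \<le> 0"
    by (auto simp: K_def le_less)
  obtain p where p: "p \<in> S" "infdist (y + s0 *\<^sub>R v) S = dist (y + s0 *\<^sub>R v) p"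
    using infdist_attains_inf[OF S] y by blast
  obtain u where "u \<in> tangent_cone S p" "norm (u - v) < \<epsilon>"
    using tangent[of s0 p] s0_range p by auto
  moreover have "h - s0 > 0"
    using s0_range by simp
  ultimately obtain t where t: "0 < t" "t < h - s0"
    and step: "infdist (y + s0 *\<^sub>R v + t *\<^sub>R v) S \<le> dist (y + s0 *\<^sub>R v) p + t * \<epsilon>"
    using infdist_step_along_tangent[OF p(1)] by blast
  \<comment> \<open>\<open>s0\<close> is the last time at which the bound holds, yet a tangent step extends it beyond \<open>s0\<close>.\<close>
  have "g (s0 + t) \<le> g s0"
    using step p(2) by (simp add: g_def algebra_simps scaleR_add_left)
  with g_s0 s0_range t have "s0 + t \<in> K"
    by (simp add: K_def)
  then have "s0 + t \<le> s0"
    by (rule s0_max)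
  with t show False
    by simp
qed

lemma directional_regular_tangent_cone_uniform:
  assumes v: "v \<in> directional_regular_tangent_cone S x d" and \<epsilon>: "\<epsilon> > 0"
  obtains \<delta> where "\<delta> > 0"
    "\<And>t e. 0 < t \<Longrightarrow> t < \<delta> \<Longrightarrow> norm (e - d) < \<delta> \<Longrightarrow> x + t *\<^sub>R e \<in> S \<Longrightarrow>
       \<exists>u\<in>tangent_cone S (x + t *\<^sub>R e). norm (u - v) < \<epsilon>"
proof -
  have "\<exists>\<delta>>0. \<forall>t e. 0 < t \<longrightarrow> t < \<delta> \<longrightarrow> norm (e - d) < \<delta> \<longrightarrow> x + t *\<^sub>R e \<in> S \<longrightarrow>
          (\<exists>u\<in>tangent_cone S (x + t *\<^sub>R e). norm (u - v) < \<epsilon>)"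
  proof (rule ccontr)
    assume "\<not> ?thesis"
    then have bad: "\<forall>\<delta>>0. \<exists>t e. 0 < t \<and> t < \<delta> \<and> norm (e - d) < \<delta> \<and> x + t *\<^sub>R e \<in> S \<and>
        (\<forall>u\<in>tangent_cone S (x + t *\<^sub>R e). \<epsilon> \<le> norm (u - v))"
      by (simp add: not_less) (meson not_le)
    have "\<forall>n::nat. \<exists>t e. 0 < t \<and> t < 1 / Suc n \<and> norm (e - d) < 1 / Suc n \<and> x + t *\<^sub>R e \<in> S \<and>
        (\<forall>u\<in>tangent_cone S (x + t *\<^sub>R e). \<epsilon> \<le> norm (u - v))"
      using bad by simp
    then obtain t e where t: "\<And>n. 0 < t n" "\<And>n. t n < 1 / Suc n"
      and e: "\<And>n. norm (e n - d) < 1 / Suc n" "\<And>n. x + t n *\<^sub>R e n \<in> S"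
      and far: "\<And>n. \<forall>u\<in>tangent_cone S (x + t n *\<^sub>R e n). \<epsilon> \<le> norm (u - v)"
      by (subst (asm) choice_iff, subst (asm) choice_iff) blast
    have "t \<longlonglongrightarrow> 0"
      using t by (intro LIMSEQ_norm_0) (simp add: abs_of_pos)
    moreover have "e \<longlonglongrightarrow> d"
      using e(1) by (intro LIM_zero_cancel[OF LIMSEQ_norm_0])
    ultimately obtain vk where vk: "vk \<longlonglongrightarrow> v"
      and tangent: "\<forall>\<^sub>F n in sequentially. vk n \<in> tangent_cone S (x + t n *\<^sub>R e n)"
      using v t(1) e(2) unfolding directional_regular_tangent_cone_def by blast
    have "(\<lambda>n. norm (vk n - v)) \<longlonglongrightarrow> 0"
      using vk by (intro tendsto_norm_zero[OF LIM_zero])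
    then have "\<forall>\<^sub>F n in sequentially. norm (vk n - v) < \<epsilon>"
      using \<epsilon> order_tendstoD(2) by blast
    with tangent have "\<forall>\<^sub>F n in sequentially. False"
      by eventually_elim (meson far not_less)
    then show False
      by simp
  qed
  then show ?thesis
    using that by blast
qed

lemma infdist_add_regular_direction_le:
  fixes S :: "'a::{real_normed_vector, heine_borel} set"
  assumes S: "closed S"
    and uniform: "\<And>t e. 0 < t \<Longrightarrow> t < \<delta> \<Longrightarrow> norm (e - d) < \<delta> \<Longrightarrow> x + t *\<^sub>R e \<in> S \<Longrightarrow>
                    \<exists>u\<in>tangent_cone S (x + t *\<^sub>R e). norm (u - v) < \<epsilon>"
    and xe: "x + t *\<^sub>R e \<in> S" and t: "0 < t" "t < \<delta>" and h: "h \<ge> 0"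
    and close: "norm (e - d) + h / t * (2 * norm v) < \<delta>"
  shows "infdist (x + t *\<^sub>R e + h *\<^sub>R v) S \<le> \<epsilon> * h"
proof (rule infdist_along_ray_le[OF S xe h])
  fix s p
  assume s: "s \<in> {0..h}" and p: "p \<in> S"
    and nearest: "dist (x + t *\<^sub>R e + s *\<^sub>R v) p = infdist (x + t *\<^sub>R e + s *\<^sub>R v) S"
  define y where "y = x + t *\<^sub>R e"
  \<comment> \<open>Nearest points along the ray stay within \<open>2 h \<bar>v\<bar>\<close> of \<open>y\<close>, where \<open>uniform\<close> applies.\<close>
  have "dist (y + s *\<^sub>R v) p \<le> s * norm v"
    using nearest infdist_le[OF xe, of "y + s *\<^sub>R v"] s by (simp add: y_def dist_norm)
  then have "norm (p - y) \<le> 2 * (h * norm v)"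
    using norm_triangle_ineq[of "p - (y + s *\<^sub>R v)" "s *\<^sub>R v"] s
      mult_right_mono[of s h "norm v"]
    by (simp add: dist_norm norm_minus_commute)
  define e' where "e' = e + (1 / t) *\<^sub>R (p - y)"
  have p_eq: "x + t *\<^sub>R e' = p"
    using t by (simp add: e'_def y_def algebra_simps)
  have "norm (e' - d) = norm ((e - d) + (1 / t) *\<^sub>R (p - y))"
    by (simp add: e'_def algebra_simps)
  also have "\<dots> \<le> norm (e - d) + norm (p - y) / t"
    using norm_triangle_ineq[of "e - d" "(1 / t) *\<^sub>R (p - y)"] t by simp
  also have "\<dots> \<le> norm (e - d) + 2 * (h * norm v) / t"
    using \<open>norm (p - y) \<le> _\<close> t by (simp add: divide_right_mono)
  also have "\<dots> < \<delta>"
    using close by (simp add: ac_simps)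
  finally show "\<exists>u\<in>tangent_cone S p. norm (u - v) < \<epsilon>"
    using uniform[OF t] p p_eq by blast
qed

lemma infdist_add_regular_direction_tendsto:
  fixes S :: "'a::{real_normed_vector, heine_borel} set"
  assumes S: "closed S" and v: "v \<in> directional_regular_tangent_cone S x d"
    and t: "\<forall>k. t k > 0" "t \<longlonglongrightarrow> 0" and h: "\<forall>k. h k > 0" "(\<lambda>k. h k / t k) \<longlonglongrightarrow> 0"
    and e: "e \<longlonglongrightarrow> d" "\<forall>k. x + t k *\<^sub>R e k \<in> S"
  shows "(\<lambda>k. infdist (x + t k *\<^sub>R e k + h k *\<^sub>R v) S / h k) \<longlonglongrightarrow> 0"
proof (rule tendstoI)
  fix r :: real
  assume r: "r > 0"
  obtain \<delta> where \<delta>: "\<delta> > 0"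
    and uniform: "\<And>t e. 0 < t \<Longrightarrow> t < \<delta> \<Longrightarrow> norm (e - d) < \<delta> \<Longrightarrow> x + t *\<^sub>R e \<in> S \<Longrightarrow>
                    \<exists>u\<in>tangent_cone S (x + t *\<^sub>R e). norm (u - v) < r / 2"
    using directional_regular_tangent_cone_uniform[OF v, of "r / 2"] r by auto
  have "(\<lambda>k. norm (e k - d) + h k / t k * (2 * norm v)) \<longlonglongrightarrow> norm (d - d) + 0 * (2 * norm v)"
    by (intro tendsto_intros e h)
  then have "\<forall>\<^sub>F k in sequentially. norm (e k - d) + h k / t k * (2 * norm v) < \<delta>"
    using \<delta> order_tendstoD(2) by force
  moreover have "\<forall>\<^sub>F k in sequentially. t k < \<delta>"
    using t(2) \<delta> order_tendstoD(2) by blast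
  ultimately show "\<forall>\<^sub>F k in sequentially.
      dist (infdist (x + t k *\<^sub>R e k + h k *\<^sub>R v) S / h k) 0 < r"
  proof eventually_elim
    case (elim k)
    have "infdist (x + t k *\<^sub>R e k + h k *\<^sub>R v) S \<le> r / 2 * h k"
      using elim e(2) t(1)[rule_format, of k] h(1)[rule_format, of k]
      by (intro infdist_add_regular_direction_le[OF S uniform]) auto
    moreover have hk: "0 < h k"
      using h(1) by simp
    ultimately have "infdist (x + t k *\<^sub>R e k + h k *\<^sub>R v) S / h k \<le> r / 2"
      by (simp add: divide_le_eq)
    moreover have "0 \<le> infdist (x + t k *\<^sub>R e k + h k *\<^sub>R v) S / h k"
      using hk by (simp add: infdist_nonneg)
    ultimately have "infdist (x + t k *\<^sub>R e k + h k *\<^sub>R v) S / h k < r"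
      "0 \<le> infdist (x + t k *\<^sub>R e k + h k *\<^sub>R v) S / h k"
      using r by linarith+
    then show ?case
      by (simp only: dist_real_def diff_zero abs_of_nonneg)
  qed
qed

lemma second_order_sequence_add_regular:
  fixes S :: "'a::{real_normed_vector, heine_borel} set"
  assumes S: "closed S" and v: "v \<in> directional_regular_tangent_cone S x d"
    and t: "\<forall>k. t k > 0" "t \<longlonglongrightarrow> 0" and h: "\<forall>k. h k > 0" "(\<lambda>k. h k / t k) \<longlonglongrightarrow> 0"
    and w: "w \<longlonglongrightarrow> w0" "\<forall>k. x + t k *\<^sub>R d + h k *\<^sub>R w k \<in> S"
  obtains w' where "w' \<longlonglongrightarrow> w0 + v" "\<forall>k. x + t k *\<^sub>R d + h k *\<^sub>R w' k \<in> S"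
proof -
  define e where "e k = d + (h k / t k) *\<^sub>R w k" for k
  have "e \<longlonglongrightarrow> d + 0 *\<^sub>R w0"
    unfolding e_def by (intro tendsto_intros h w)
  moreover have te: "t k *\<^sub>R e k = t k *\<^sub>R d + h k *\<^sub>R w k" for k
    using t(1)[rule_format, of k] by (simp add: e_def scaleR_add_right)
  ultimately have "(\<lambda>k. infdist (x + t k *\<^sub>R e k + h k *\<^sub>R v) S / h k) \<longlonglongrightarrow> 0"
    using w(2) by (intro infdist_add_regular_direction_tendsto[OF S v t h]) (simp_all add: add.assoc)
  moreover define z where "z k = x + t k *\<^sub>R d + h k *\<^sub>R (w k + v)" for k
  moreover have "x + t k *\<^sub>R e k + h k *\<^sub>R v = z k" for k
    by (simp add: z_def te scaleR_add_right add.assoc)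
  ultimately have dist_small: "(\<lambda>k. infdist (z k) S / h k) \<longlonglongrightarrow> 0"
    by simp
  have "\<exists>q. q \<in> S \<and> infdist (z k) S = dist (z k) q" for k
    using infdist_attains_inf[OF S] w(2) by blast
  then obtain q where q: "\<And>k. q k \<in> S" "\<And>k. infdist (z k) S = dist (z k) (q k)"
    by metis
  define w' where "w' k = w k + v + (1 / h k) *\<^sub>R (q k - z k)" for k
  have norm_eq: "(\<lambda>k. norm ((1 / h k) *\<^sub>R (q k - z k))) = (\<lambda>k. infdist (z k) S / h k)"
    using q(2) h(1) by (simp add: fun_eq_iff dist_norm norm_minus_commute abs_of_pos)
  have "(\<lambda>k. (1 / h k) *\<^sub>R (q k - z k)) \<longlonglongrightarrow> 0"
    using dist_small unfolding norm_eq[symmetric] by (rule tendsto_norm_zero_cancel)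
  then have "w' \<longlonglongrightarrow> w0 + v + 0"
    unfolding w'_def by (intro tendsto_intros w)
  moreover have "x + t k *\<^sub>R d + h k *\<^sub>R w' k = q k" for k
    using h(1)[rule_format, of k] by (simp add: w'_def z_def scaleR_add_right algebra_simps)
  ultimately show ?thesis
    using that q(1) by simp
qed

lemma second_order_tangent_set_add_regular:
  fixes S :: "'a::{real_normed_vector, heine_borel} set"
  assumes S: "closed S" and w: "w \<in> second_order_tangent_set S x d"
    and v: "v \<in> directional_regular_tangent_cone S x d"
  shows "w + v \<in> second_order_tangent_set S x d"
proof -
  obtain t wk where t: "\<forall>k. t k > 0" "t \<longlonglongrightarrow> 0"
    and wk: "wk \<longlonglongrightarrow> w" "\<forall>k. x + t k *\<^sub>R d + ((1/2) * (t k)\<^sup>2) *\<^sub>R wk k \<in> S"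
    using w unfolding second_order_tangent_set_def by blast
  have t_nonzero: "t k \<noteq> 0" for k
    using t(1) by (metis less_irrefl)
  then have ratio: "(\<lambda>k. (1/2) * (t k)\<^sup>2 / t k) = (\<lambda>k. t k / 2)"
    by (simp add: fun_eq_iff power2_eq_square)
  have "(\<lambda>k. (1/2) * (t k)\<^sup>2 / t k) \<longlonglongrightarrow> 0"
    unfolding ratio by (rule tendsto_divide_zero[OF t(2)])
  moreover have "\<forall>k. (1/2) * (t k)\<^sup>2 > 0"
    using t_nonzero by simp
  ultimately obtain w' where "w' \<longlonglongrightarrow> w + v" "\<forall>k. x + t k *\<^sub>R d + ((1/2) * (t k)\<^sup>2) *\<^sub>R w' k \<in> S"
    using second_order_sequence_add_regular[OF S v t _ _ wk] by blast
  then show ?thesis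
    unfolding second_order_tangent_set_def using t by blast
qed

lemma asymptotic_second_order_tangent_cone_add_regular:
  fixes S :: "'a::{real_normed_vector, heine_borel} set"
  assumes S: "closed S" and w: "w \<in> asymptotic_second_order_tangent_cone S x d"
    and v: "v \<in> directional_regular_tangent_cone S x d"
  shows "w + v \<in> asymptotic_second_order_tangent_cone S x d"
proof -
  obtain t r wk where t: "\<forall>k. t k > 0" "t \<longlonglongrightarrow> 0" and r: "\<forall>k. r k > 0" "r \<longlonglongrightarrow> 0"
    and tr: "(\<lambda>k. t k / r k) \<longlonglongrightarrow> 0"
    and wk: "wk \<longlonglongrightarrow> w" "\<forall>k. x + t k *\<^sub>R d + ((1/2) * t k * r k) *\<^sub>R wk k \<in> S"
    using w unfolding asymptotic_second_order_tangent_cone_def by blast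
  have "t k \<noteq> 0" for k
    using t(1) by (metis less_irrefl)
  then have ratio: "(\<lambda>k. (1/2) * t k * r k / t k) = (\<lambda>k. r k / 2)"
    by (simp add: fun_eq_iff)
  have "(\<lambda>k. (1/2) * t k * r k / t k) \<longlonglongrightarrow> 0"
    unfolding ratio by (rule tendsto_divide_zero[OF r(2)])
  moreover have "\<forall>k. (1/2) * t k * r k > 0"
    using t(1) r(1) by simp
  ultimately obtain w' where "w' \<longlonglongrightarrow> w + v" "\<forall>k. x + t k *\<^sub>R d + ((1/2) * t k * r k) *\<^sub>R w' k \<in> S"
    using second_order_sequence_add_regular[OF S v t _ _ wk] by blast
  then show ?thesis
    unfolding asymptotic_second_order_tangent_cone_def using t r tr by blast
qed

lemma set_plus_absorb:
  fixes A B :: "'a::monoid_add set"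
  assumes "0 \<in> B" and "\<And>a b. a \<in> A \<Longrightarrow> b \<in> B \<Longrightarrow> a + b \<in> A"
  shows "A + B = A"
proof
  show "A + B \<subseteq> A"
    using assms(2) by (auto elim: set_plus_elim)
  show "A \<subseteq> A + B"
    using set_plus_intro[OF _ assms(1)] by fastforce
qed

theorem proposition2p3:
  fixes S :: "(real ^ 'n) set" and x d :: "real ^ 'n"
  assumes "closed S" and "x \<in> S" and "d \<in> tangent_cone S x"
  shows "second_order_tangent_set S x d + directional_regular_tangent_cone S x d
           = second_order_tangent_set S x d \<and>
         asymptotic_second_order_tangent_cone S x d + directional_regular_tangent_cone S x d
           = asymptotic_second_order_tangent_cone S x d"
  using set_plus_absorb[OF zero_mem_directional_regular_tangent_cone
      second_order_tangent_set_add_regular[OF assms(1)]]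
    set_plus_absorb[OF zero_mem_directional_regular_tangent_cone
      asymptotic_second_order_tangent_cone_add_regular[OF assms(1)]]
  by blast

end
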